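(* Assume $4d\Lambda\le1$. There exist positive constants $C_1,C_2$ depending only on $d$ such that for all $(\xi,\eta)\in\mathbf{C}^{d+1}$ with $0<\Re\eta<\Lambda$ and $|\Im\xi|<C_1\sqrt{\Re\eta/\Lambda}$, $$\Lambda\max\big[|e(\xi)|^2,|e(\bar\xi)|^2\big]\le\Big(1+C_2|\Im\xi|^2/[\Re\eta/\Lambda]\Big)\,\big|e^\eta-1+\Lambda e(\bar\xi)^*e(\xi)\big|.$$
   Context: $\Lambda>0$. For $\xi\in\mathbf{C}^d$, $e(\xi)\in\mathbf{C}^d$ is the column vector with entries $e_j(\xi)=e^{-i\mathbf{e}_j\cdot\xi}-1$ ($\mathbf{e}_j$ the $j$-th unit vector, so $\mathbf{e}_j\cdot\xi=\xi_j$); $\bar\xi$ is the complex conjugate of $\xi$, $^*$ denotes conjugate transpose, and $|\cdot|$ is the Euclidean norm on $\mathbf{C}^d$. *)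

theory Defs
  imports "HOL-Analysis.Analysis"
begin

definition evec :: "complex^'n \<Rightarrow> complex^'n" where
  "evec \<xi> = (\<chi> j. exp (- \<i> * (\<xi> $ j)) - 1)"

definition cnjvec :: "complex^'n \<Rightarrow> complex^'n" where
  "cnjvec \<xi> = (\<chi> j. cnj (\<xi> $ j))"

definition imvec :: "complex^'n \<Rightarrow> real^'n" where
  "imvec \<xi> = (\<chi> j. Im (\<xi> $ j))"

definition cinner :: "complex^'n \<Rightarrow> complex^'n \<Rightarrow> complex" where
  "cinner u v = (\<Sum>j\<in>UNIV. cnj (u $ j) * v $ j)"

end

theory Submission
  imports Defs
begin

text \<open>
  Write \<open>\<xi> = a + i b\<close> coordinatewise and \<open>U = \<Sum>\<^sub>j (1 - cos a\<^sub>j)\<close>.  For real \<open>\<xi>\<close> one has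
  \<open>|e(\<xi>)|\<^sup>2 = e(\<xi>)\<^sup>*e(\<xi>) = 2U\<close>, so the claim reads \<open>2\<Lambda>U \<le> |e\<^sup>\<eta> - 1 + 2\<Lambda>U|\<close>, which holds
  because \<open>|e\<^sup>\<eta>| \<ge> 1 + Re \<eta>\<close> and \<open>2\<Lambda>U \<le> 4d\<Lambda> \<le> 1\<close>.  A small imaginary part \<open>b\<close> perturbs
  \<open>|e(\<xi>)|\<^sup>2\<close> and \<open>Re (e(cnj \<xi>)\<^sup>*e(\<xi>))\<close> by \<open>O(|b|\<^sup>2)\<close> and \<open>O(|b| U)\<close>, and creates an imaginary
  part of size \<open>O(|b| \<surd>U)\<close>.  The mixed terms are absorbed by AM-GM with weight proportional to
  \<open>r = \<Lambda>|b|\<^sup>2 / Re \<eta>\<close>; all errors are then at most \<open>O(r)\<close> relative to \<open>Re \<eta> + 2\<Lambda>U\<close>, which gives the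
  factor \<open>1 + C\<^sub>2 r\<close> as long as \<open>r\<close> is small, i.e. \<open>|Im \<xi>| < C\<^sub>1 \<surd>(Re \<eta> / \<Lambda>)\<close>.
\<close>

lemma exp_le_quadratic:
  fixes b :: real
  assumes "\<bar>b\<bar> \<le> 1"
  shows "exp b \<le> 1 + b + b\<^sup>2"
proof (cases "b \<ge> 0")
  case True
  then show ?thesis using exp_bound assms by auto
next
  case False
  have "1 - b \<le> exp (-b)" using exp_ge_add_one_self[of "-b"] by simp
  moreover have "0 \<le> 1 + b + b\<^sup>2" using assms by (simp add: abs_le_iff add_nonneg_nonneg)
  ultimately have "(1 - b) * (1 + b + b\<^sup>2) \<le> exp (-b) * (1 + b + b\<^sup>2)"
    by (rule mult_right_mono)
  moreover have "(1 - b) * (1 + b + b\<^sup>2) = 1 - b ^ 3"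
    by (simp add: algebra_simps power2_eq_square power3_eq_cube)
  moreover have "b ^ 3 \<le> 0" using False by (simp add: power3_eq_cube mult_nonneg_nonpos zero_le_mult_iff)
  ultimately have "1 \<le> exp (-b) * (1 + b + b\<^sup>2)" by linarith
  then show ?thesis by (simp add: exp_minus field_simps)
qed

lemma exp_bounds_abs_le_one:
  fixes b :: real
  assumes "\<bar>b\<bar> \<le> 1"
  shows "\<bar>exp b - 1\<bar> \<le> 2 * \<bar>b\<bar>"
    and "\<bar>exp b + exp (-b) - 2\<bar> \<le> 2 * b\<^sup>2"
    and "\<bar>exp b - exp (-b)\<bar> \<le> 3 * \<bar>b\<bar>"
proof -
  have "\<bar>b\<bar> * \<bar>b\<bar> \<le> \<bar>b\<bar> * 1" using assms by (intro mult_left_mono) auto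
  then have "b\<^sup>2 \<le> \<bar>b\<bar>" by (simp add: power2_eq_square)
  moreover have "1 + b \<le> exp b" "1 - b \<le> exp (-b)"
    using exp_ge_add_one_self[of b] exp_ge_add_one_self[of "-b"] by auto
  moreover have "exp b \<le> 1 + b + b\<^sup>2" "exp (-b) \<le> 1 - b + b\<^sup>2"
    using exp_le_quadratic[of b] exp_le_quadratic[of "-b"] assms by auto
  moreover have "b \<le> \<bar>b\<bar>" "- b \<le> \<bar>b\<bar>" by auto
  ultimately show "\<bar>exp b - 1\<bar> \<le> 2 * \<bar>b\<bar>"
    and "\<bar>exp b + exp (-b) - 2\<bar> \<le> 2 * b\<^sup>2"
    and "\<bar>exp b - exp (-b)\<bar> \<le> 3 * \<bar>b\<bar>"
    unfolding abs_le_iff by (intro conjI; linarith)+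
qed

lemma cmod_exp_minus_ii_mult_minus_one_sq:
  "(cmod (exp (- \<i> * z) - 1))\<^sup>2 = (exp (Im z) - 1)\<^sup>2 + 2 * exp (Im z) * (1 - cos (Re z))"
proof -
  have "(cmod (exp (- \<i> * z) - 1))\<^sup>2
      = (exp (Im z) * cos (Re z) - 1)\<^sup>2 + (exp (Im z) * sin (Re z))\<^sup>2"
    by (simp add: exp_eq_polar cmod_power2)
  also have "\<dots> = (exp (Im z) - 1)\<^sup>2 + 2 * exp (Im z) * (1 - cos (Re z))"
    using sin_cos_squared_add[of "Re z"] by algebra
  finally show ?thesis .
qed

lemma Re_cnj_exp_minus_ii_mult:
  "Re (cnj (exp (- \<i> * cnj z) - 1) * (exp (- \<i> * z) - 1))
     = 2 - (exp (Im z) + exp (- Im z)) * cos (Re z)"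
proof -
  have "Re (cnj (exp (- \<i> * cnj z) - 1) * (exp (- \<i> * z) - 1))
     = (exp (- Im z) * cos (Re z) - 1) * (exp (Im z) * cos (Re z) - 1)
       + exp (- Im z) * sin (Re z) * (exp (Im z) * sin (Re z))"
    by (simp add: exp_eq_polar)
  also have "\<dots> = 2 - (exp (Im z) + exp (- Im z)) * cos (Re z)"
    using sin_cos_squared_add[of "Re z"] exp_minus_inverse[of "Im z"] by algebra
  finally show ?thesis .
qed

lemma Im_cnj_exp_minus_ii_mult:
  "Im (cnj (exp (- \<i> * cnj z) - 1) * (exp (- \<i> * z) - 1))
     = sin (Re z) * (exp (Im z) - exp (- Im z))"
  by (simp add: exp_eq_polar algebra_simps)

text \<open>For \<open>b = 0\<close> the weight \<open>g = 0\<close> is allowed, using \<open>b\<^sup>2 / 0 = 0\<close>.\<close>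

lemma abs_mult_le_amgm:
  fixes b t g u :: real
  assumes "0 \<le> g" "b \<noteq> 0 \<Longrightarrow> 0 < g" "t\<^sup>2 \<le> 2 * u"
  shows "\<bar>b\<bar> * \<bar>t\<bar> \<le> g * u + b\<^sup>2 / (2 * g)"
proof (cases "b = 0")
  case True
  moreover have "0 \<le> u" using assms(3) zero_le_power2[of t] by linarith
  ultimately show ?thesis using assms(1) by simp
next
  case False
  then have "0 < g" using assms(2) by blast
  have "2 * g * (\<bar>b\<bar> * \<bar>t\<bar>) \<le> g\<^sup>2 * t\<^sup>2 + b\<^sup>2"
    using zero_le_power2[of "g * \<bar>t\<bar> - \<bar>b\<bar>"] by (simp add: power2_eq_square algebra_simps)
  also have "\<dots> \<le> 2 * g * (g * u) + b\<^sup>2"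
    using assms(3) \<open>0 < g\<close> by (simp add: power2_eq_square)
  finally show ?thesis using \<open>0 < g\<close> by (simp add: field_simps)
qed

lemma evec_component_estimates:
  fixes z :: complex and g :: real
  assumes "\<bar>Im z\<bar> \<le> 1" "0 \<le> g" "Im z \<noteq> 0 \<Longrightarrow> 0 < g"
  defines "u \<equiv> 1 - cos (Re z)" and "P \<equiv> cnj (exp (- \<i> * cnj z) - 1) * (exp (- \<i> * z) - 1)"
  shows "(cmod (exp (- \<i> * z) - 1))\<^sup>2 \<le> 4 * (Im z)\<^sup>2 + (2 + 4 * g) * u + 2 * ((Im z)\<^sup>2 / g)"
    and "\<bar>Re P - 2 * u\<bar> \<le> 2 * (Im z)\<^sup>2"
    and "\<bar>Im P\<bar> \<le> 3 * g * u + 3 / 2 * ((Im z)\<^sup>2 / g)"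
proof -
  note exp_bounds = exp_bounds_abs_le_one[OF assms(1)]
  have u: "0 \<le> u" "u \<le> 2" unfolding u_def using cos_le_one[of "Re z"] cos_ge_minus_one[of "Re z"] by auto
  have "u\<^sup>2 \<le> 2 * u" using u by (simp add: power2_eq_square mult_right_mono)
  then have amgm_u: "\<bar>Im z\<bar> * u \<le> g * u + (Im z)\<^sup>2 / (2 * g)"
    using abs_mult_le_amgm[of g "Im z" u u] assms(2,3) u by simp
  have "(sin (Re z))\<^sup>2 = u * (1 + cos (Re z))"
    unfolding u_def sin_squared_eq by (simp add: power2_eq_square algebra_simps)
  also have "\<dots> \<le> u * 2" using u cos_le_one[of "Re z"] by (intro mult_left_mono) auto
  finally have amgm_sin: "\<bar>Im z\<bar> * \<bar>sin (Re z)\<bar> \<le> g * u + (Im z)\<^sup>2 / (2 * g)"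
    using abs_mult_le_amgm[of g "Im z" "sin (Re z)" u] assms(2,3) by (simp add: mult.commute)
  have "(exp (Im z) - 1)\<^sup>2 \<le> 4 * (Im z)\<^sup>2"
    using power_mono[OF exp_bounds(1) abs_ge_zero, of 2] by (simp add: power_mult_distrib)
  moreover have "2 * exp (Im z) * u \<le> 2 * (1 + 2 * \<bar>Im z\<bar>) * u"
    using exp_bounds(1) u by (intro mult_right_mono) auto
  ultimately have "(cmod (exp (- \<i> * z) - 1))\<^sup>2 \<le> 4 * (Im z)\<^sup>2 + 2 * u + 4 * (\<bar>Im z\<bar> * u)"
    unfolding cmod_exp_minus_ii_mult_minus_one_sq u_def[symmetric] by (simp add: algebra_simps)
  also have "\<dots> \<le> 4 * (Im z)\<^sup>2 + 2 * u + 4 * (g * u + (Im z)\<^sup>2 / (2 * g))"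
    using amgm_u by simp
  finally show "(cmod (exp (- \<i> * z) - 1))\<^sup>2 \<le> 4 * (Im z)\<^sup>2 + (2 + 4 * g) * u + 2 * ((Im z)\<^sup>2 / g)"
    by (simp add: algebra_simps)
  have "Re P - 2 * u = (2 - (exp (Im z) + exp (- Im z))) * cos (Re z)"
    unfolding P_def u_def Re_cnj_exp_minus_ii_mult by (simp add: algebra_simps)
  moreover have "\<bar>exp (Im z) + exp (- Im z) - 2\<bar> * \<bar>cos (Re z)\<bar> \<le> 2 * (Im z)\<^sup>2 * 1"
    using exp_bounds(2) abs_cos_le_one[of "Re z"] by (intro mult_mono) auto
  moreover have "\<bar>2 - (exp (Im z) + exp (- Im z))\<bar> = \<bar>exp (Im z) + exp (- Im z) - 2\<bar>"
    by (rule abs_minus_commute)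
  ultimately show "\<bar>Re P - 2 * u\<bar> \<le> 2 * (Im z)\<^sup>2"
    by (simp add: abs_mult)
  have "\<bar>Im P\<bar> \<le> \<bar>sin (Re z)\<bar> * (3 * \<bar>Im z\<bar>)"
    unfolding P_def Im_cnj_exp_minus_ii_mult abs_mult using exp_bounds(3) by (rule mult_left_mono) simp
  also have "\<dots> = 3 * (\<bar>Im z\<bar> * \<bar>sin (Re z)\<bar>)" by simp
  also have "\<dots> \<le> 3 * (g * u + (Im z)\<^sup>2 / (2 * g))" using amgm_sin by simp
  finally show "\<bar>Im P\<bar> \<le> 3 * g * u + 3 / 2 * ((Im z)\<^sup>2 / g)" by (simp add: field_simps)
qed

lemma power2_norm_vec:
  fixes v :: "'a::real_normed_vector ^ 'n"
  shows "(norm v)\<^sup>2 = (\<Sum>j\<in>UNIV. (norm (v $ j))\<^sup>2)"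
  by (simp add: norm_vec_def L2_set_def sum_nonneg)

definition cos_defect :: "complex ^ 'n \<Rightarrow> real" where
  "cos_defect \<xi> = (\<Sum>j\<in>UNIV. 1 - cos (Re (\<xi> $ j)))"

lemma evec_estimates:
  fixes \<xi> :: "complex ^ 'n" and g :: real
  assumes "norm (imvec \<xi>) \<le> 1" "0 \<le> g" "imvec \<xi> \<noteq> 0 \<Longrightarrow> 0 < g"
  defines "B \<equiv> (norm (imvec \<xi>))\<^sup>2" and "S \<equiv> cinner (evec (cnjvec \<xi>)) (evec \<xi>)"
  shows "(norm (evec \<xi>))\<^sup>2 \<le> 4 * B + (2 + 4 * g) * cos_defect \<xi> + 2 * (B / g)"
    and "\<bar>Re S - 2 * cos_defect \<xi>\<bar> \<le> 2 * B"
    and "\<bar>Im S\<bar> \<le> 3 * g * cos_defect \<xi> + 3 / 2 * (B / g)"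
proof -
  have Im_le: "\<bar>Im (\<xi> $ j)\<bar> \<le> 1" for j
    using component_le_norm_cart[of "imvec \<xi>" j] assms(1) by (simp add: imvec_def)
  have g_pos: "Im (\<xi> $ j) \<noteq> 0 \<Longrightarrow> 0 < g" for j
    using assms(3) by (auto simp: imvec_def vec_eq_iff)
  note est = evec_component_estimates[OF Im_le assms(2) g_pos]
  have B: "B = (\<Sum>j\<in>UNIV. (Im (\<xi> $ j))\<^sup>2)"
    by (simp add: B_def power2_norm_vec imvec_def)
  have "(norm (evec \<xi>))\<^sup>2 = (\<Sum>j\<in>UNIV. (cmod (exp (- \<i> * \<xi> $ j) - 1))\<^sup>2)"
    by (simp add: power2_norm_vec evec_def)
  also have "\<dots> \<le> (\<Sum>j\<in>UNIV. 4 * (Im (\<xi> $ j))\<^sup>2 + (2 + 4 * g) * (1 - cos (Re (\<xi> $ j)))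
                               + 2 * ((Im (\<xi> $ j))\<^sup>2 / g))"
    by (intro sum_mono est(1))
  finally show "(norm (evec \<xi>))\<^sup>2 \<le> 4 * B + (2 + 4 * g) * cos_defect \<xi> + 2 * (B / g)"
    by (simp add: B cos_defect_def sum.distrib sum_distrib_left sum_divide_distrib)
  have S: "S = (\<Sum>j\<in>UNIV. cnj (exp (- \<i> * cnj (\<xi> $ j)) - 1) * (exp (- \<i> * \<xi> $ j) - 1))"
    by (simp add: S_def cinner_def evec_def cnjvec_def)
  have "\<bar>Re S - 2 * cos_defect \<xi>\<bar>
      = \<bar>\<Sum>j\<in>UNIV. Re (cnj (exp (- \<i> * cnj (\<xi> $ j)) - 1) * (exp (- \<i> * \<xi> $ j) - 1))
                   - 2 * (1 - cos (Re (\<xi> $ j)))\<bar>"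
    by (simp add: S cos_defect_def Re_sum sum_subtractf sum_distrib_left)
  also have "\<dots> \<le> (\<Sum>j\<in>UNIV. 2 * (Im (\<xi> $ j))\<^sup>2)"
    by (intro sum_abs[THEN order_trans] sum_mono est(2))
  finally show "\<bar>Re S - 2 * cos_defect \<xi>\<bar> \<le> 2 * B"
    by (simp add: B sum_distrib_left)
  have "\<bar>Im S\<bar> = \<bar>\<Sum>j\<in>UNIV. Im (cnj (exp (- \<i> * cnj (\<xi> $ j)) - 1) * (exp (- \<i> * \<xi> $ j) - 1))\<bar>"
    by (simp add: S Im_sum)
  also have "\<dots> \<le> (\<Sum>j\<in>UNIV. 3 * g * (1 - cos (Re (\<xi> $ j))) + 3 / 2 * ((Im (\<xi> $ j))\<^sup>2 / g))"
    by (intro sum_abs[THEN order_trans] sum_mono est(3))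
  finally show "\<bar>Im S\<bar> \<le> 3 * g * cos_defect \<xi> + 3 / 2 * (B / g)"
    by (simp add: B cos_defect_def sum.distrib sum_distrib_left sum_divide_distrib)
qed

lemma norm_exp_minus_one_plus_ge:
  fixes \<eta> S :: complex and \<Lambda> U :: real
  assumes "0 \<le> \<Lambda>" "2 * \<Lambda> * U \<le> 1"
  shows "Re \<eta> + 2 * \<Lambda> * U - \<Lambda> * \<bar>Re S - 2 * U\<bar> - \<Lambda> * \<bar>Im S\<bar>
           \<le> cmod (exp \<eta> - 1 + of_real \<Lambda> * S)"
proof -
  have "1 + Re \<eta> \<le> cmod (exp \<eta>)" by (simp add: norm_exp_eq_Re)
  moreover have "cmod (exp \<eta>) - cmod (1 - of_real \<Lambda> * S) \<le> cmod (exp \<eta> - 1 + of_real \<Lambda> * S)"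
    using norm_triangle_ineq2[of "exp \<eta>" "1 - of_real \<Lambda> * S"] by (simp add: algebra_simps)
  moreover have "cmod (1 - of_real \<Lambda> * S) \<le> \<bar>1 - \<Lambda> * Re S\<bar> + \<Lambda> * \<bar>Im S\<bar>"
    using cmod_le[of "1 - of_real \<Lambda> * S"] assms(1) by (simp add: abs_mult)
  moreover have "\<bar>1 - \<Lambda> * Re S\<bar> \<le> (1 - 2 * \<Lambda> * U) + \<Lambda> * \<bar>Re S - 2 * U\<bar>"
  proof -
    have "\<bar>1 - \<Lambda> * Re S\<bar> = \<bar>(1 - 2 * \<Lambda> * U) - \<Lambda> * (Re S - 2 * U)\<bar>"
      by (simp add: algebra_simps)
    also have "\<dots> \<le> \<bar>1 - 2 * \<Lambda> * U\<bar> + \<bar>\<Lambda> * (Re S - 2 * U)\<bar>" by (rule abs_triangle_ineq4)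
    finally show ?thesis using assms by (simp add: abs_mult)
  qed
  ultimately show ?thesis by linarith
qed

text \<open>With \<open>V = \<Lambda>U\<close>, \<open>D = \<Lambda>|Im \<xi>|\<^sup>2/g\<close> and \<open>g = 8r\<close>, the left side is the upper bound for
  \<open>\<Lambda>|e(\<xi>)|\<^sup>2\<close> and the second factor on the right the lower bound for \<open>|e\<^sup>\<eta> - 1 + \<Lambda>e(cnj \<xi>)\<^sup>*e(\<xi>)|\<close>.\<close>

lemma arith_closing_bound:
  fixes x r V D :: real
  assumes "0 < x" "0 \<le> r" "r \<le> 1/64" "0 \<le> V" "0 \<le> D" "D \<le> x / 8"
  shows "4 * r * x + (2 + 32 * r) * V + 2 * D
         \<le> (1 + 64 * r) * (x + 2 * V - 2 * r * x - 24 * r * V - 3 / 2 * D)"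
proof -
  have "(1 + 64 * r) * (x + 2 * V - 2 * r * x - 24 * r * V - 3 / 2 * D)
        - (4 * r * x + (2 + 32 * r) * V + 2 * D)
      = x * (1 + 58 * r - 128 * r\<^sup>2) + r * V * (72 - 1536 * r) - D * (7 / 2 + 96 * r)"
    by (simp add: algebra_simps power2_eq_square)
  moreover have "x \<le> x * (1 + 58 * r - 128 * r\<^sup>2)"
  proof -
    have "r * (128 * r) \<le> r * 58" using assms by (intro mult_left_mono) auto
    then have "1 \<le> 1 + 58 * r - 128 * r\<^sup>2" by (simp add: power2_eq_square)
    then show ?thesis using assms(1) mult_left_mono[of 1 _ x] by simp
  qed
  moreover have "0 \<le> r * V * (72 - 1536 * r)" using assms by simp
  moreover have "D * (7 / 2 + 96 * r) \<le> x / 8 * 5" using assms by (intro mult_mono) auto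
  ultimately show ?thesis using assms(1) by linarith
qed

lemma imvec_cnjvec [simp]: "imvec (cnjvec \<xi>) = - imvec \<xi>"
  by (simp add: imvec_def cnjvec_def vec_eq_iff)

lemma cos_defect_cnjvec [simp]: "cos_defect (cnjvec \<xi>) = cos_defect \<xi>"
  by (simp add: cos_defect_def cnjvec_def)

lemma cos_defect_bounds: "0 \<le> cos_defect (\<xi> :: complex ^ 'n)" "cos_defect \<xi> \<le> 2 * real CARD('n)"
proof -
  have "0 \<le> 1 - cos t" "1 - cos t \<le> 2" for t :: real
    using cos_le_one[of t] cos_ge_minus_one[of t] by auto
  then show "0 \<le> cos_defect \<xi>" "cos_defect \<xi> \<le> 2 * real CARD('n)"
    unfolding cos_defect_def
    using sum_bounded_above[of UNIV "\<lambda>j. 1 - cos (Re (\<xi> $ j))" 2] by (auto intro: sum_nonneg)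
qed

lemma mult_cos_defect_le_half:
  fixes \<xi> :: "complex ^ 'n"
  assumes "0 \<le> \<Lambda>" "4 * real CARD('n) * \<Lambda> \<le> 1"
  shows "2 * \<Lambda> * cos_defect \<xi> \<le> 1"
proof -
  have "2 * \<Lambda> * cos_defect \<xi> = 2 * (\<Lambda> * cos_defect \<xi>)" by simp
  also have "\<dots> \<le> 2 * (\<Lambda> * (2 * real CARD('n)))"
    using cos_defect_bounds(2) assms(1) by (intro mult_left_mono) auto
  also have "\<dots> \<le> 1" using assms(2) by (simp add: algebra_simps)
  finally show ?thesis .
qed

lemma evec_cinner_estimate:
  fixes \<xi> :: "complex ^ 'n" and \<eta> :: complex and \<Lambda> :: real
  assumes "0 < \<Lambda>" "4 * real CARD('n) * \<Lambda> \<le> 1" "0 < Re \<eta>" "Re \<eta> < \<Lambda>"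
    and "64 * \<Lambda> * (norm (imvec \<xi>))\<^sup>2 \<le> Re \<eta>"
  shows "\<Lambda> * max ((norm (evec \<xi>))\<^sup>2) ((norm (evec (cnjvec \<xi>)))\<^sup>2)
           \<le> (1 + 64 * \<Lambda> * (norm (imvec \<xi>))\<^sup>2 / Re \<eta>) *
              cmod (exp \<eta> - 1 + of_real \<Lambda> * cinner (evec (cnjvec \<xi>)) (evec \<xi>))"
proof -
  define x B U S where "x = Re \<eta>" and "B = (norm (imvec \<xi>))\<^sup>2" and "U = cos_defect \<xi>"
    and "S = cinner (evec (cnjvec \<xi>)) (evec \<xi>)"
  define r where "r = \<Lambda> * B / x"
  define g where "g = 8 * r"
  define D where "D = B / g"
  have x: "0 < x" "x < \<Lambda>" using assms(3,4) by (simp_all add: x_def)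
  have "0 \<le> B" by (simp add: B_def)
  then have r: "0 \<le> r" "r \<le> 1/64" "\<Lambda> * B = r * x"
    using assms(1,5) x by (simp_all add: r_def x_def B_def field_simps)
  have "\<Lambda> * (64 * B) < \<Lambda> * 1" using assms(5) x unfolding B_def x_def by linarith
  then have "B \<le> 1" using assms(1) by simp
  then have small: "norm (imvec \<xi>) \<le> 1" "norm (imvec (cnjvec \<xi>)) \<le> 1"
    using abs_square_le_1[of "norm (imvec \<xi>)"] by (simp_all add: B_def)
  have g: "0 \<le> g" "imvec \<xi> \<noteq> 0 \<Longrightarrow> 0 < g" "imvec (cnjvec \<xi>) \<noteq> 0 \<Longrightarrow> 0 < g"
    using r(1) assms(1) x by (simp_all add: g_def r_def B_def)
  note est = evec_estimates[OF small(1) g(1,2), folded B_def U_def S_def D_def]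
  note est_cnj = evec_estimates[OF small(2) g(1,3),
      unfolded imvec_cnjvec norm_minus_cancel cos_defect_cnjvec, folded B_def U_def D_def]
  have D: "0 \<le> \<Lambda> * D" "\<Lambda> * D \<le> x / 8"
    using assms(1) x g(1) by (auto simp: D_def g_def r_def field_simps)
  have U: "0 \<le> \<Lambda> * U" "2 * \<Lambda> * U \<le> 1"
    using cos_defect_bounds(1)[of \<xi>] mult_cos_defect_le_half[of \<Lambda> \<xi>] assms(1,2)
    by (simp_all add: U_def)
  have "\<Lambda> * max ((norm (evec \<xi>))\<^sup>2) ((norm (evec (cnjvec \<xi>)))\<^sup>2)
        \<le> \<Lambda> * (4 * B + (2 + 4 * g) * U + 2 * D)"
    using est(1) est_cnj(1) assms(1) by simp
  also have "\<dots> = 4 * r * x + (2 + 32 * r) * (\<Lambda> * U) + 2 * (\<Lambda> * D)"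
    using r(3) unfolding g_def by algebra
  also have "\<dots> \<le> (1 + 64 * r) * (x + 2 * (\<Lambda> * U) - 2 * r * x - 24 * r * (\<Lambda> * U) - 3 / 2 * (\<Lambda> * D))"
    by (rule arith_closing_bound[OF x(1) r(1,2) U(1) D])
  also have "\<dots> \<le> (1 + 64 * r) * cmod (exp \<eta> - 1 + of_real \<Lambda> * S)"
  proof (rule mult_left_mono)
    have "\<Lambda> * \<bar>Re S - 2 * U\<bar> \<le> \<Lambda> * (2 * B)" "\<Lambda> * \<bar>Im S\<bar> \<le> \<Lambda> * (3 * g * U + 3 / 2 * D)"
      using est(2,3) assms(1) by (simp_all add: mult_left_mono)
    moreover have "\<Lambda> * (2 * B) = 2 * r * x" using r(3) by algebra
    moreover have "\<Lambda> * (3 * g * U + 3 / 2 * D) = 24 * r * (\<Lambda> * U) + 3 / 2 * (\<Lambda> * D)"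
      by (simp add: g_def algebra_simps)
    ultimately show "x + 2 * (\<Lambda> * U) - 2 * r * x - 24 * r * (\<Lambda> * U) - 3 / 2 * (\<Lambda> * D)
               \<le> cmod (exp \<eta> - 1 + of_real \<Lambda> * S)"
      using norm_exp_minus_one_plus_ge[of \<Lambda> U \<eta> S, folded x_def] assms(1) U(2) by linarith
  qed (use r(1) in simp)
  finally show ?thesis by (simp add: r_def B_def x_def S_def mult.assoc)
qed

theorem lemma5p1:
  shows "\<exists>C1 C2 :: real. C1 > 0 \<and> C2 > 0 \<and>
    (\<forall>(\<Lambda>::real) (\<xi>::complex^'n) (\<eta>::complex).
       \<Lambda> > 0 \<and> 4 * real CARD('n) * \<Lambda> \<le> 1 \<and>
       0 < Re \<eta> \<and> Re \<eta> < \<Lambda> \<and>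
       norm (imvec \<xi>) < C1 * sqrt (Re \<eta> / \<Lambda>) \<longrightarrow>
       \<Lambda> * max ((norm (evec \<xi>))\<^sup>2) ((norm (evec (cnjvec \<xi>)))\<^sup>2)
         \<le> (1 + C2 * (norm (imvec \<xi>))\<^sup>2 / (Re \<eta> / \<Lambda>)) *
            cmod (exp \<eta> - 1 + complex_of_real \<Lambda> * cinner (evec (cnjvec \<xi>)) (evec \<xi>)))"
proof (rule exI[of _ "1/8"], rule exI[of _ 64], intro conjI allI impI)
  fix \<Lambda> :: real and \<xi> :: "complex ^ 'n" and \<eta> :: complex
  assume H: "\<Lambda> > 0 \<and> 4 * real CARD('n) * \<Lambda> \<le> 1 \<and> 0 < Re \<eta> \<and> Re \<eta> < \<Lambda> \<and>
             norm (imvec \<xi>) < 1/8 * sqrt (Re \<eta> / \<Lambda>)"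
  then have "0 \<le> Re \<eta> / \<Lambda>" by simp
  have "(norm (imvec \<xi>))\<^sup>2 \<le> (1/8 * sqrt (Re \<eta> / \<Lambda>))\<^sup>2"
    using H by (intro power_mono) auto
  also have "\<dots> = Re \<eta> / \<Lambda> / 64"
    unfolding power_mult_distrib real_sqrt_pow2[OF \<open>0 \<le> Re \<eta> / \<Lambda>\<close>]
    by (simp add: power2_eq_square)
  finally have "64 * \<Lambda> * (norm (imvec \<xi>))\<^sup>2 \<le> Re \<eta>"
    using H by (simp add: field_simps)
  then show "\<Lambda> * max ((norm (evec \<xi>))\<^sup>2) ((norm (evec (cnjvec \<xi>)))\<^sup>2)
      \<le> (1 + 64 * (norm (imvec \<xi>))\<^sup>2 / (Re \<eta> / \<Lambda>)) *
         cmod (exp \<eta> - 1 + complex_of_real \<Lambda> * cinner (evec (cnjvec \<xi>)) (evec \<xi>))"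
    using evec_cinner_estimate[of \<Lambda> \<eta> \<xi>] H by (simp add: field_simps)
qed simp_all

end
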